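(* Let $\mathrm{tHC}$ be the twisted associative algebra generated by $S_t$-invariant elements $\mathsf m^{2p}_{\underline t}$ of arity $t\geqslant1$ and homological degree $2p$, for all $t\geqslant1$ and $p\geqslant0$, with $\overline{\mathsf m}_I=\sum_{p\geqslant0}\mathsf m^{2p}_I$, subject to the relations \[ \sum_{\substack{\underline n=I\sqcup J\\ i\in I,\ j\in J}}\overline{\mathsf m}_I\overline{\mathsf m}_J=\sum_{\substack{\underline n=I\sqcup J\\ i\in I,\ j\in J}}\overline{\mathsf m}_J\overline{\mathsf m}_I\qquad(n\geqslant2,\ i\neq j\in\underline n), \] understood homological degree by homological degree. Then for every $n\geqslant1$, each of the two elements \[ \sum_{\substack{I\sqcup J=\underline n\\ j\in J}}\overline{\mathsf m}_I\overline{\mathsf m}_J,\qquad \sum_{\substack{I\sqcup J=\underline n\\ j\in J}}\overline{\mathsf m}_J\overline{\mathsf m}_I \] (sums over decompositions into nonempty $I,J$, taken degree by degree) is independent of the choice of $j\in\underline n$.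
   Context: Work over a field $\Bbbk$ of characteristic zero, homologically graded vector spaces; $\underline n=\{1,\dots,n\}$. A twisted associative algebra is a species with natural associative unital products $\mathcal A(J)\otimes\mathcal A(K)\to\mathcal A(J\sqcup K)$; $\mathsf x_I$ is the relabeling of an $S_t$-invariant element of arity $t$ to a $t$-element set $I$; relations are imposed with all relabelings. Since $\overline{\mathsf m}_t$ is an infinite sum of elements of different degrees, each identity involving these sums is to be read as the family of identities obtained by separating the terms by total homological degree (each involving finitely many terms). *)

theory Defs
  imports Main
begin

text \<open>Concrete model of tHC as a quotient of the free twisted associative algebra.
  A basis word of the free twisted associative algebra on the generators
  m^{2p}_I (I a finite nonempty label set, S_t-invariance meaning the generator
  relabelled to I depends only on I) is a list of pairs (p, I); the word
  [(p1,I1),...,(pk,Ik)] stands for the product m^{2p1}_{I1} ... m^{2pk}_{Ik},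
  which lives in arity I1 \<union> ... \<union> Ik (blocks pairwise disjoint).
  Elements are (finitely supported) coefficient functions on words.\<close>

type_synonym tword = "(nat \<times> nat set) list"

definition valid_word :: "tword \<Rightarrow> bool" where
  "valid_word w \<longleftrightarrow>
     (\<forall>b\<in>set w. finite (snd b) \<and> snd b \<noteq> {}) \<and>
     (\<forall>a<length w. \<forall>c<length w. a \<noteq> c \<longrightarrow> snd (w ! a) \<inter> snd (w ! c) = {})"

definition word_arity :: "tword \<Rightarrow> nat set" where
  "word_arity w = \<Union> (snd ` set w)"

definition bvec :: "tword \<Rightarrow> tword \<Rightarrow> 'k::field" where
  "bvec u w = (if w = u then 1 else 0)"

definition rel_gen :: "tword \<Rightarrow> tword \<Rightarrow> nat set \<Rightarrow> nat \<Rightarrow> nat \<Rightarrow> nat \<Rightarrow> tword \<Rightarrow> 'k::field" where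
  "rel_gen u v T i j d = (\<lambda>w. \<Sum>(I,J,p,q) \<in> {(I,J,p,q). I \<union> J = T \<and> I \<inter> J = {} \<and> i \<in> I \<and> j \<in> J
                                              \<and> 2*p + 2*q = d}.
        bvec (u @ [(p,I),(q,J)] @ v) w - bvec (u @ [(q,J),(p,I)] @ v) w)"

inductive_set tHC_ideal :: "(tword \<Rightarrow> 'k::field) set" where
  zero: "(\<lambda>_. 0) \<in> tHC_ideal"
| add: "a \<in> tHC_ideal \<Longrightarrow> b \<in> tHC_ideal \<Longrightarrow> (\<lambda>w. a w + b w) \<in> tHC_ideal"
| smult: "a \<in> tHC_ideal \<Longrightarrow> (\<lambda>w. c * a w) \<in> tHC_ideal"
| gen: "valid_word u \<Longrightarrow> valid_word v \<Longrightarrow> finite T \<Longrightarrow> i \<in> T \<Longrightarrow> j \<in> T \<Longrightarrow> i \<noteq> j \<Longrightarrow>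
        word_arity u \<inter> word_arity v = {} \<Longrightarrow> word_arity u \<inter> T = {} \<Longrightarrow> word_arity v \<inter> T = {} \<Longrightarrow>
        rel_gen u v T i j d \<in> tHC_ideal"

definition sumIJ :: "nat \<Rightarrow> nat \<Rightarrow> nat \<Rightarrow> tword \<Rightarrow> 'k::field" where
  "sumIJ n j d = (\<lambda>w. \<Sum>(I,J,p,q) \<in> {(I,J,p,q). I \<union> J = {1..n} \<and> I \<inter> J = {} \<and> I \<noteq> {} \<and> j \<in> J
                                           \<and> 2*p + 2*q = d}.
        bvec [(p,I),(q,J)] w)"

definition sumJI :: "nat \<Rightarrow> nat \<Rightarrow> nat \<Rightarrow> tword \<Rightarrow> 'k::field" where
  "sumJI n j d = (\<lambda>w. \<Sum>(I,J,p,q) \<in> {(I,J,p,q). I \<union> J = {1..n} \<and> I \<inter> J = {} \<and> I \<noteq> {} \<and> j \<in> J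
                                           \<and> 2*p + 2*q = d}.
        bvec [(q,J),(p,I)] w)"

end

theory Submission
  imports Defs
begin

text \<open>In the difference of the sums for \<open>j\<close> and \<open>j'\<close>, the decompositions with \<open>j, j' \<in> J\<close>
  cancel. What remains are the decompositions with \<open>j' \<in> I, j \<in> J\<close> minus those with
  \<open>j \<in> I, j' \<in> J\<close> (the condition \<open>I \<noteq> {}\<close> is then automatic). Exchanging \<open>I\<close> and \<open>J\<close> in the
  latter shows that, degree by degree, the difference is exactly the relation for the pair
  \<open>(j', j)\<close> for the sums \<open>\<Sum> m\<^sub>I m\<^sub>J\<close>, and its negative for the sums \<open>\<Sum> m\<^sub>J m\<^sub>I\<close>.\<close>

definition splittings :: "'a set \<Rightarrow> ('a set \<Rightarrow> 'a set \<Rightarrow> bool) \<Rightarrow> nat \<Rightarrow> ('a set \<times> 'a set \<times> nat \<times> nat) set" where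
  "splittings T P d = {(I,J,p,q). I \<union> J = T \<and> I \<inter> J = {} \<and> P I J \<and> 2*p + 2*q = d}"

definition swap_blocks :: "'a set \<times> 'a set \<times> nat \<times> nat \<Rightarrow> 'a set \<times> 'a set \<times> nat \<times> nat" where
  "swap_blocks = (\<lambda>(I,J,p,q). (J,I,q,p))"

lemma finite_splittings:
  assumes "finite T"
  shows "finite (splittings T P d)"
proof (rule finite_subset)
  show "splittings T P d \<subseteq> Pow T \<times> Pow T \<times> {..d} \<times> {..d}"
    by (auto simp: splittings_def)
qed (use assms in simp)

lemma swap_blocks_swap_blocks [simp]: "swap_blocks (swap_blocks x) = x"
  by (simp add: swap_blocks_def split: prod.splits)

lemma inj_swap_blocks: "inj swap_blocks"
  by (metis injI swap_blocks_swap_blocks)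

lemma swap_blocks_image_splittings:
  "swap_blocks ` splittings T P d = splittings T (\<lambda>I J. P J I) d"
proof -
  have "x \<in> swap_blocks ` A \<longleftrightarrow> swap_blocks x \<in> A" for x and A :: "('a set \<times> 'a set \<times> nat \<times> nat) set"
    using image_eqI[of x swap_blocks "swap_blocks x" A] by auto
  then show ?thesis
    by (auto simp: swap_blocks_def splittings_def split: prod.splits)
qed

lemma sum_splittings_diff:
  fixes g :: "'a set \<times> 'a set \<times> nat \<times> nat \<Rightarrow> 'b::ab_group_add"
  assumes "finite T" "j \<in> T" "j' \<in> T" "j \<noteq> j'"
  shows "(\<Sum>x\<in>splittings T (\<lambda>I J. I \<noteq> {} \<and> j \<in> J) d. g x)
       - (\<Sum>x\<in>splittings T (\<lambda>I J. I \<noteq> {} \<and> j' \<in> J) d. g x)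
       = (\<Sum>x\<in>splittings T (\<lambda>I J. j' \<in> I \<and> j \<in> J) d. g x - g (swap_blocks x))"
proof -
  let ?S = "\<lambda>P. splittings T P d"
  let ?A = "?S (\<lambda>I J. j' \<in> I \<and> j \<in> J)" and ?A' = "?S (\<lambda>I J. j \<in> I \<and> j' \<in> J)"
  let ?C = "?S (\<lambda>I J. I \<noteq> {} \<and> j \<in> J \<and> j' \<in> J)"
  have fin: "finite (?S P)" for P
    using assms(1) by (rule finite_splittings)
  have split_j: "?S (\<lambda>I J. I \<noteq> {} \<and> j \<in> J) = ?A \<union> ?C"
    using assms(3) by (auto simp: splittings_def)
  have split_j': "?S (\<lambda>I J. I \<noteq> {} \<and> j' \<in> J) = ?A' \<union> ?C"
    using assms(2) by (auto simp: splittings_def)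
  have disj: "?A \<inter> ?C = {}" "?A' \<inter> ?C = {}"
    by (auto simp: splittings_def)
  have "sum g ?A' = sum g (swap_blocks ` ?A)"
    by (simp add: swap_blocks_image_splittings conj_commute)
  also have "\<dots> = (\<Sum>x\<in>?A. g (swap_blocks x))"
    by (simp add: sum.reindex inj_on_subset[OF inj_swap_blocks])
  finally have swap: "sum g ?A' = (\<Sum>x\<in>?A. g (swap_blocks x))" .
  show ?thesis
    unfolding split_j split_j' sum.union_disjoint[OF fin fin disj(1)]
      sum.union_disjoint[OF fin fin disj(2)] swap sum_subtractf
    by simp
qed

definition blocks_word :: "nat set \<times> nat set \<times> nat \<times> nat \<Rightarrow> tword" where
  "blocks_word = (\<lambda>(I,J,p,q). [(p,I),(q,J)])"

lemma sumIJ_eq_sum_splittings: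
  "sumIJ n j d w = (\<Sum>x\<in>splittings {1..n} (\<lambda>I J. I \<noteq> {} \<and> j \<in> J) d. bvec (blocks_word x) w)"
  unfolding sumIJ_def splittings_def blocks_word_def by (simp only: conj_assoc case_prod_beta')

lemma sumJI_eq_sum_splittings:
  "sumJI n j d w
     = (\<Sum>x\<in>splittings {1..n} (\<lambda>I J. I \<noteq> {} \<and> j \<in> J) d. bvec (blocks_word (swap_blocks x)) w)"
  unfolding sumJI_def splittings_def blocks_word_def swap_blocks_def
  by (simp only: conj_assoc case_prod_beta' prod.case fst_conv snd_conv)

lemma rel_gen_Nil_eq_sum_splittings:
  "rel_gen [] [] T i j d w = (\<Sum>x\<in>splittings T (\<lambda>I J. i \<in> I \<and> j \<in> J) d.
     bvec (blocks_word x) w - bvec (blocks_word (swap_blocks x)) w)"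
  unfolding rel_gen_def splittings_def blocks_word_def swap_blocks_def
  by (simp only: conj_assoc case_prod_beta' prod.case fst_conv snd_conv append.simps)

lemma rel_gen_Nil_in_tHC_ideal:
  assumes "finite T" "i \<in> T" "j \<in> T" "i \<noteq> j"
  shows "rel_gen [] [] T i j d \<in> tHC_ideal"
  by (rule tHC_ideal.gen) (use assms in \<open>simp_all add: valid_word_def word_arity_def\<close>)

lemma tHC_ideal_uminus: "a \<in> tHC_ideal \<Longrightarrow> (\<lambda>w. - a w) \<in> tHC_ideal"
  using tHC_ideal.smult[of a "-1"] by simp

theorem mainTheorem19:
  fixes n j j' d :: nat
  assumes "n \<ge> 1" and "j \<in> {1..n}" and "j' \<in> {1..n}"
  shows "(\<lambda>w. (sumIJ n j d w :: 'k::field_char_0) - sumIJ n j' d w) \<in> tHC_ideal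
       \<and> (\<lambda>w. (sumJI n j d w :: 'k::field_char_0) - sumJI n j' d w) \<in> tHC_ideal"
proof (cases "j = j'")
  case True
  then show ?thesis using tHC_ideal.zero by simp
next
  case False
  let ?r = "rel_gen [] [] {1..n} j' j d :: tword \<Rightarrow> 'k"
  have r: "?r \<in> tHC_ideal"
    using assms False by (intro rel_gen_Nil_in_tHC_ideal) auto
  note diff = sum_splittings_diff[OF finite_atLeastAtMost assms(2,3) False]
  have "(\<lambda>w. sumIJ n j d w - sumIJ n j' d w) = ?r"
    unfolding sumIJ_eq_sum_splittings rel_gen_Nil_eq_sum_splittings diff ..
  moreover have "(\<lambda>w. sumJI n j d w - sumJI n j' d w) = (\<lambda>w. - ?r w)"
    unfolding sumJI_eq_sum_splittings rel_gen_Nil_eq_sum_splittings diff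
    by (simp add: sum_negf[symmetric])
  ultimately show ?thesis
    using r tHC_ideal_uminus by simp
qed

end
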